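(* Let $n\ge 2$ and let $\Delta(SD_{8n})$ be the commuting graph of the semidihedral group $SD_{8n}$. (i) If $n$ is odd, the Sombor spectrum of $\Delta(SD_{8n})$ consists of $-(8n-1)\sqrt2$ with multiplicity $3$, $-(4n-1)\sqrt2$ with multiplicity $4n-5$, $-7\sqrt2$ with multiplicity $3n$, $21\sqrt2$ with multiplicity $n-1$, and the three roots (with multiplicity) of \[\big(x-3(8n-1)\sqrt2\big)\big(x-(4n-5)(4n-1)\sqrt2\big)(x-21\sqrt2)-32(n-1)(40n^2-12n+1)(x-21\sqrt2)-32n(32n^2-8n+25)\big(x-(4n-1)(4n-5)\sqrt2\big).\] (ii) If $n$ is even, the Sombor spectrum of $\Delta(SD_{8n})$ consists of $-(8n-1)\sqrt2$ with multiplicity $1$, $-(4n-1)\sqrt2$ with multiplicity $4n-3$, $-3\sqrt2$ with multiplicity $2n$, $3\sqrt2$ with multiplicity $2n-1$, and the three roots (with multiplicity) of \[\big(x-(8n-1)\sqrt2\big)\big(x-(4n-1)(4n-3)\sqrt2\big)(x-3\sqrt2)-8(2n-1)(40n^2-12n+1)(x-3\sqrt2)-16n(32n^2-8n+5)\big(x-(4n-1)(4n-3)\sqrt2\big).\]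
   Context: For a finite simple graph $\Gamma$ with vertices $u_1,\dots,u_N$, the Sombor matrix $S(\Gamma)$ has $(i,j)$ entry $\sqrt{\deg(u_i)^2+\deg(u_j)^2}$ if $u_i,u_j$ are adjacent and $0$ otherwise; the Sombor spectrum is the multiset of its eigenvalues. The semidihedral group is $SD_{8n}=\langle a,b: a^{4n}=b^2=e,\ ba=a^{2n-1}b\rangle$ of order $8n$. The commuting graph $\Delta(G)$ of a group $G$ has vertex set $G$, two distinct vertices $x,y$ being adjacent iff $xy=yx$. *)

theory Defs
  imports "Jordan_Normal_Form.Char_Poly" "HOL-Computational_Algebra.Polynomial"
begin

text \<open>Concrete model of SD_{8n} = <a,b | a^(4n)=b^2=e, ba=a^(2n-1)b>:
  the pair (i,j) with i < 4n, j < 2 stands for a^i b^j.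
  Since b a^k = a^((2n-1)k) b, we get
  (a^i b^j)(a^k b^l) = a^(i + (2n-1)^j k) b^(j+l).\<close>

definition sd_mult :: "nat \<Rightarrow> nat \<times> nat \<Rightarrow> nat \<times> nat \<Rightarrow> nat \<times> nat" where
  "sd_mult n x y = (case x of (i, j) \<Rightarrow> case y of (k, l) \<Rightarrow>
      ((i + (2 * n - 1) ^ j * k) mod (4 * n), (j + l) mod 2))"

definition sd_list :: "nat \<Rightarrow> (nat \<times> nat) list" where
  "sd_list n = [(i, j). j \<leftarrow> [0..<2], i \<leftarrow> [0..<4 * n]]"

definition commuting_adj :: "nat \<Rightarrow> nat \<times> nat \<Rightarrow> nat \<times> nat \<Rightarrow> bool" where
  "commuting_adj n x y \<longleftrightarrow> x \<noteq> y \<and> sd_mult n x y = sd_mult n y x"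

definition graph_deg :: "'v list \<Rightarrow> ('v \<Rightarrow> 'v \<Rightarrow> bool) \<Rightarrow> 'v \<Rightarrow> nat" where
  "graph_deg vs E x = card {y \<in> set vs. E x y}"

definition sombor_matrix :: "'v list \<Rightarrow> ('v \<Rightarrow> 'v \<Rightarrow> bool) \<Rightarrow> complex mat" where
  "sombor_matrix vs E = mat (length vs) (length vs) (\<lambda>(i, j).
     if E (vs ! i) (vs ! j)
     then complex_of_real (sqrt (real (graph_deg vs E (vs ! i)) ^ 2 + real (graph_deg vs E (vs ! j)) ^ 2))
     else 0)"

definition sombor_spectrum :: "'v list \<Rightarrow> ('v \<Rightarrow> 'v \<Rightarrow> bool) \<Rightarrow> complex multiset" where
  "sombor_spectrum vs E = proots (char_poly (sombor_matrix vs E))"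

end

theory Submission
  imports Defs
begin

(* The commuting graph of SD_8n is a union of cliques glued along the centre. Put p = n for odd n
   and p = 2n for even n. The centre consists of the 4n/p rotations a^i with p dividing i, the
   remaining rotations form one clique, the reflections a^i b fall into p cliques of size 4n/p
   according to i mod p, and apart from the edges at the centre there are no others. Hence the
   Sombor matrix is constant on the blocks of this partition, with zero diagonal.
   For any such block pattern matrix, a block of size s with diagonal entry delta and off-diagonal
   entry alpha contributes the eigenvalue delta - alpha with multiplicity s - 1 (the vectors
   e_x - e_y inside the block), and the remaining eigenvalues are those of the quotient matrix.
   Applying this to the Sombor matrix, and once more to its quotient, in which the p reflection
   classes are alike and mutually non-adjacent, leaves a 3 x 3 matrix whose characteristic
   polynomial is the cubic. *)

section \<open>Matrices with a block pattern\<close>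

definition block_pattern_mat ::
    "nat \<Rightarrow> (nat \<Rightarrow> nat) \<Rightarrow> (nat \<Rightarrow> 'a) \<Rightarrow> (nat \<Rightarrow> 'a) \<Rightarrow> (nat \<Rightarrow> nat \<Rightarrow> 'a) \<Rightarrow> 'a mat" where
  "block_pattern_mat N blk \<delta> \<alpha> \<beta> = mat N N (\<lambda>(i, j).
     if blk i = blk j then (if i = j then \<delta> (blk i) else \<alpha> (blk i)) else \<beta> (blk i) (blk j))"

text \<open>This is the column-sum quotient matrix, the transpose of the usual row-sum one: entry
  (b, b') sums a column of block b' over the rows of block b, and sz b is the size of block b.\<close>
definition quotient_mat ::
    "nat \<Rightarrow> (nat \<Rightarrow> nat) \<Rightarrow> (nat \<Rightarrow> 'a) \<Rightarrow> (nat \<Rightarrow> 'a) \<Rightarrow> (nat \<Rightarrow> nat \<Rightarrow> 'a::semiring_1) \<Rightarrow> 'a mat" where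
  "quotient_mat B sz \<delta> \<alpha> \<beta> = mat B B (\<lambda>(b, b').
     if b = b' then \<delta> b + of_nat (sz b - 1) * \<alpha> b else of_nat (sz b) * \<beta> b b')"

lemma block_pattern_mat_carrier [simp]: "block_pattern_mat N blk \<delta> \<alpha> \<beta> \<in> carrier_mat N N"
  by (simp add: block_pattern_mat_def)

lemma quotient_mat_dim [simp]:
  "dim_row (quotient_mat B sz \<delta> \<alpha> \<beta>) = B" "dim_col (quotient_mat B sz \<delta> \<alpha> \<beta>) = B"
  by (simp_all add: quotient_mat_def)

lemma sum_block_pattern_mat_column:
  fixes \<beta> :: "nat \<Rightarrow> nat \<Rightarrow> 'a::comm_ring_1"
  assumes j: "j < N" and sz: "card {i. i < N \<and> blk i = b} = s"
  shows "(\<Sum>i<N. if blk i = b then block_pattern_mat N blk \<delta> \<alpha> \<beta> $$ (i, j) else 0)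
    = (if blk j = b then \<delta> b + of_nat (s - 1) * \<alpha> b else of_nat s * \<beta> b (blk j))"
proof -
  let ?A = "block_pattern_mat N blk \<delta> \<alpha> \<beta>"
  define S where "S = {i. i < N \<and> blk i = b}"
  have "(\<Sum>i<N. if blk i = b then ?A $$ (i, j) else 0) = (\<Sum>i\<in>S. ?A $$ (i, j))"
    unfolding S_def by (simp add: sum.inter_filter[symmetric] lessThan_def conj_commute)
  also have "\<dots> = (if blk j = b then \<delta> b + of_nat (s - 1) * \<alpha> b else of_nat s * \<beta> b (blk j))"
  proof (cases "blk j = b")
    case True
    then have jS: "j \<in> S" using j by (simp add: S_def)
    have "(\<Sum>i\<in>S. ?A $$ (i, j)) = ?A $$ (j, j) + (\<Sum>i\<in>S - {j}. ?A $$ (i, j))"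
      by (rule sum.remove[OF _ jS]) (simp add: S_def)
    also have "(\<Sum>i\<in>S - {j}. ?A $$ (i, j)) = (\<Sum>i\<in>S - {j}. \<alpha> b)"
      using j True by (intro sum.cong) (auto simp: S_def block_pattern_mat_def)
    finally show ?thesis
      using j jS True sz by (simp add: S_def block_pattern_mat_def)
  next
    case False
    have "(\<Sum>i\<in>S. ?A $$ (i, j)) = (\<Sum>i\<in>S. \<beta> b (blk j))"
      using j False by (intro sum.cong) (auto simp: S_def block_pattern_mat_def)
    then show ?thesis using False sz by (simp add: S_def)
  qed
  finally show ?thesis .
qed

lemma char_poly_four_block_mat_upper_right_zero:
  fixes A1 :: "'a::idom mat"
  assumes A1: "A1 \<in> carrier_mat n n" and A3: "A3 \<in> carrier_mat m n" and A4: "A4 \<in> carrier_mat m m"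
  shows "char_poly (four_block_mat A1 (0\<^sub>m n m) A3 A4) = char_poly A1 * char_poly A4"
proof -
  let ?cm = "\<lambda>A. [:0, 1:] \<cdot>\<^sub>m 1\<^sub>m (dim_row A) + map_mat (\<lambda>a. [:- a:]) A"
  have "?cm (four_block_mat A1 (0\<^sub>m n m) A3 A4)
      = four_block_mat (?cm A1) (0\<^sub>m n m) (map_mat (\<lambda>a. [:- a:]) A3) (?cm A4)"
    by (rule eq_matI) (use A1 A3 A4 in \<open>auto simp: one_poly_def\<close>)
  then show ?thesis
    unfolding char_poly_defs using A1 A3 A4
    by (simp add: det_four_block_mat_upper_right_zero[of _ n _ m])
qed

lemma char_poly_diagonal:
  fixes f :: "nat \<Rightarrow> 'a::comm_ring_1"
  shows "char_poly (mat m m (\<lambda>(t, t'). if t = t' then f t else 0)) = (\<Prod>t<m. [:- f t, 1:])"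
proof -
  have "char_poly (mat m m (\<lambda>(t, t'). if t = t' then f t else 0)) = (\<Prod>a\<leftarrow>map f [0..<m]. [:- a, 1:])"
    by (subst char_poly_upper_triangular[of _ m])
      (auto simp: upper_triangular_def diag_mat_def intro!: arg_cong[where f = prod_list])
  also have "\<dots> = (\<Prod>t<m. [:- f t, 1:])"
    by (simp add: prod.distinct_set_conv_list[symmetric] comp_def atLeast0LessThan)
  finally show ?thesis .
qed

lemma similar_mat_conjugate:
  fixes A :: "'a::field mat"
  assumes A: "A \<in> carrier_mat n n" and P: "P \<in> carrier_mat n n" and Q: "Q \<in> carrier_mat n n"
    and QP: "Q * P = 1\<^sub>m n"
  shows "similar_mat A (Q * A * P)"
proof (rule similar_matI[of _ _ P Q n])
  have PQ: "P * Q = 1\<^sub>m n" by (rule mat_mult_left_right_inverse[OF Q P QP])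
  have "P * (Q * A * P) * Q = (P * Q) * A * (P * Q)"
    using A P Q by (simp add: assoc_mult_mat[of _ n n _ n _ n])
  then show "A = P * (Q * A * P) * Q" using A PQ by simp
qed (use A P Q QP mat_mult_left_right_inverse[OF Q P QP] in auto)

locale block_partition =
  fixes N B :: nat and blk :: "nat \<Rightarrow> nat"
  assumes blk_less: "i < N \<Longrightarrow> blk i < B"
    and block_nonempty: "b < B \<Longrightarrow> \<exists>i<N. blk i = b"
begin

definition rep :: "nat \<Rightarrow> nat" where
  "rep b = (SOME i. i < N \<and> blk i = b)"

lemma rep_in_block: "b < B \<Longrightarrow> rep b < N \<and> blk (rep b) = b"
  unfolding rep_def using block_nonempty by (rule someI_ex) blast

lemma inj_on_rep: "inj_on rep {..<B}"
  by (metis rep_in_block inj_onI lessThan_iff)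

lemma rep_image_subset: "rep ` {..<B} \<subseteq> {..<N}"
  using rep_in_block by auto

lemma B_le_N: "B \<le> N"
  using card_mono[OF _ rep_image_subset] card_image[OF inj_on_rep] by simp

definition nonreps :: "nat list" where
  "nonreps = sorted_list_of_set ({..<N} - rep ` {..<B})"

lemma length_nonreps: "length nonreps = N - B"
  using rep_image_subset by (simp add: nonreps_def card_Diff_subset card_image[OF inj_on_rep])

lemma nonreps_nth:
  assumes "t < N - B"
  shows "nonreps ! t < N" and "blk (nonreps ! t) < B" and "b < B \<Longrightarrow> nonreps ! t \<noteq> rep b"
proof -
  have "nonreps ! t \<in> {..<N} - rep ` {..<B}"
    using assms length_nonreps nth_mem[of t nonreps] by (simp add: nonreps_def)
  then show "nonreps ! t < N" "blk (nonreps ! t) < B" "b < B \<Longrightarrow> nonreps ! t \<noteq> rep b"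
    using blk_less by auto
qed

lemma nonreps_nth_eq_iff:
  "t < N - B \<Longrightarrow> t' < N - B \<Longrightarrow> nonreps ! t = nonreps ! t' \<longleftrightarrow> t = t'"
  using length_nonreps by (simp add: nonreps_def nth_eq_iff_index_eq)

lemma prod_nonreps:
  fixes g :: "nat \<Rightarrow> 'a::comm_monoid_mult"
  shows "(\<Prod>t<N - B. g (blk (nonreps ! t))) = (\<Prod>b<B. g b ^ (card {i. i < N \<and> blk i = b} - 1))"
proof -
  have "(\<Prod>t<N - B. g (blk (nonreps ! t))) = (\<Prod>i\<in>set nonreps. g (blk i))"
    using length_nonreps by (intro prod.reindex_bij_betw bij_betw_nth) (simp_all add: nonreps_def)
  also have "\<dots> = (\<Prod>b<B. \<Prod>i\<in>{i. i \<in> set nonreps \<and> blk i = b}. g (blk i))"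
    using blk_less by (intro prod.group[symmetric]) (auto simp: nonreps_def)
  also have "\<dots> = (\<Prod>b<B. g b ^ (card {i. i < N \<and> blk i = b} - 1))"
  proof (intro prod.cong refl)
    fix b assume b: "b \<in> {..<B}"
    have "{i. i < N \<and> blk i = b} = insert (rep b) {i. i \<in> set nonreps \<and> blk i = b}"
      using rep_in_block b by (auto simp: nonreps_def)
    moreover have "rep b \<notin> {i. i \<in> set nonreps \<and> blk i = b}" using b by (simp add: nonreps_def)
    ultimately have "card {i. i \<in> set nonreps \<and> blk i = b} = card {i. i < N \<and> blk i = b} - 1"
      by simp
    then show "(\<Prod>i\<in>{i. i \<in> set nonreps \<and> blk i = b}. g (blk i)) = g b ^ (card {i. i < N \<and> blk i = b} - 1)"
      by simp
  qed
  finally show ?thesis .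
qed

text \<open>The columns e_x - e_(rep (blk x)) of expand_mat are eigenvectors of a block pattern
  matrix for the eigenvalue \<delta> - \<alpha> of the block of x, while the block-indicator rows of
  collapse_mat span a left-invariant subspace on which it acts as the quotient matrix.\<close>
definition expand_mat :: "'a::comm_ring_1 mat" where
  "expand_mat = mat N N (\<lambda>(i, k).
     if k < B then of_bool (i = rep k)
     else of_bool (i = nonreps ! (k - B)) - of_bool (i = rep (blk (nonreps ! (k - B)))))"

definition collapse_mat :: "'a::comm_ring_1 mat" where
  "collapse_mat = mat N N (\<lambda>(k, i).
     if k < B then of_bool (blk i = k) else of_bool (i = nonreps ! (k - B)))"

lemma expand_mat_carrier [simp]: "expand_mat \<in> carrier_mat N N"
  by (simp add: expand_mat_def)

lemma collapse_mat_carrier [simp]: "collapse_mat \<in> carrier_mat N N"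
  by (simp add: collapse_mat_def)

lemma mult_expand_mat_index:
  fixes M :: "'a::comm_ring_1 mat"
  assumes "M \<in> carrier_mat N N" "i < N" "l < N"
  shows "(M * expand_mat) $$ (i, l) = (if l < B then M $$ (i, rep l)
    else M $$ (i, nonreps ! (l - B)) - M $$ (i, rep (blk (nonreps ! (l - B)))))"
  using assms rep_in_block nonreps_nth[of "l - B"]
  by (auto simp: expand_mat_def scalar_prod_def of_bool_def right_diff_distrib sum_subtractf
      if_distrib[of "(*) _"] sum.delta' cong: if_cong)

lemma collapse_mat_mult_index:
  fixes M :: "'a::comm_ring_1 mat"
  assumes "M \<in> carrier_mat N N" "k < N" "l < N"
  shows "(collapse_mat * M) $$ (k, l) = (if k < B then (\<Sum>i<N. if blk i = k then M $$ (i, l) else 0)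
    else M $$ (nonreps ! (k - B), l))"
  using assms nonreps_nth[of "k - B"]
  by (auto simp: collapse_mat_def scalar_prod_def of_bool_def if_distrib[of "\<lambda>x. x * _"]
      sum.delta atLeast0LessThan cong: if_cong)

lemma collapse_mult_expand_index:
  fixes M :: "'a::comm_ring_1 mat"
  assumes M: "M \<in> carrier_mat N N" and k: "k < N" and l: "l < N"
  shows "(collapse_mat * M * expand_mat) $$ (k, l) = (if k < B
    then (\<Sum>i<N. if blk i = k then (M * expand_mat) $$ (i, l) else 0)
    else (M * expand_mat) $$ (nonreps ! (k - B), l))"
proof -
  have ME: "M * expand_mat \<in> carrier_mat N N" using M by (rule mult_carrier_mat) simp
  have "collapse_mat * M * expand_mat = collapse_mat * (M * expand_mat)"
    using M by (intro assoc_mult_mat[of _ N N _ N _ N]) simp_all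
  then show ?thesis using collapse_mat_mult_index[OF ME k l] by simp
qed

lemma sum_block_of_bool:
  assumes "j < N"
  shows "(\<Sum>i<N. if blk i = k then of_bool (i = j) else 0) = (of_bool (blk j = k) :: 'a::comm_ring_1)"
proof -
  have "(\<Sum>i<N. if blk i = k then of_bool (i = j) else 0) = (\<Sum>i<N. if i = j then of_bool (blk j = k) else (0::'a))"
    by (intro sum.cong) auto
  then show ?thesis using assms by simp
qed

lemma collapse_mat_mult_expand_mat: "collapse_mat * expand_mat = (1\<^sub>m N :: 'a::comm_ring_1 mat)"
proof (rule eq_matI)
  fix k l assume "k < dim_row (1\<^sub>m N :: 'a mat)" "l < dim_col (1\<^sub>m N :: 'a mat)"
  then have k: "k < N" and l: "l < N" by auto
  have "(collapse_mat * expand_mat) $$ (k, l) = (of_bool (k = l) :: 'a)"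
  proof (cases "k < B")
    case kB: True
    have "(collapse_mat * expand_mat) $$ (k, l) = (\<Sum>i<N. if blk i = k then expand_mat $$ (i, l) else (0::'a))"
      using kB k l by (simp add: collapse_mat_mult_index)
    also have "\<dots> = of_bool (k = l)"
    proof (cases "l < B")
      case True
      have "(\<Sum>i<N. if blk i = k then expand_mat $$ (i, l) else (0::'a))
          = (\<Sum>i<N. if blk i = k then of_bool (i = rep l) else 0)"
        using True l by (intro sum.cong) (auto simp: expand_mat_def)
      then show ?thesis
        using True rep_in_block[of l] sum_block_of_bool[of "rep l" k] by auto
    next
      case False
      define x where "x = nonreps ! (l - B)"
      have x: "x < N" "blk x < B" using False l nonreps_nth[of "l - B"] by (auto simp: x_def)
      have "(\<Sum>i<N. if blk i = k then expand_mat $$ (i, l) else (0::'a))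
          = (\<Sum>i<N. (if blk i = k then of_bool (i = x) else 0) - (if blk i = k then of_bool (i = rep (blk x)) else 0))"
        using False l by (intro sum.cong) (auto simp: expand_mat_def x_def)
      also have "\<dots> = 0"
        using x rep_in_block[of "blk x"] by (simp add: sum_subtractf sum_block_of_bool)
      finally show ?thesis using False kB by simp
    qed
    finally show ?thesis .
  next
    case False
    then have "(collapse_mat * expand_mat) $$ (k, l) = expand_mat $$ (nonreps ! (k - B), l)"
      using k l by (simp add: collapse_mat_mult_index)
    also have "\<dots> = of_bool (k = l)"
      using False k l nonreps_nth[of "k - B"] nonreps_nth[of "l - B"] nonreps_nth_eq_iff[of "k - B" "l - B"]
      by (auto simp: expand_mat_def)
    finally show ?thesis .
  qed
  then show "(collapse_mat * expand_mat) $$ (k, l) = (1\<^sub>m N :: 'a mat) $$ (k, l)"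
    using k l by (cases "k = l") simp_all
qed (simp_all add: collapse_mat_def expand_mat_def)

context
  fixes \<delta> \<alpha> :: "nat \<Rightarrow> 'a::comm_ring_1" and \<beta> :: "nat \<Rightarrow> nat \<Rightarrow> 'a" and sz :: "nat \<Rightarrow> nat"
  assumes sz: "\<And>b. b < B \<Longrightarrow> card {i. i < N \<and> blk i = b} = sz b"
begin

lemma collapse_block_pattern_expand_upper_left:
  assumes "k < B" "l < B"
  shows "(collapse_mat * block_pattern_mat N blk \<delta> \<alpha> \<beta> * expand_mat) $$ (k, l)
    = quotient_mat B sz \<delta> \<alpha> \<beta> $$ (k, l)"
proof -
  have "(collapse_mat * block_pattern_mat N blk \<delta> \<alpha> \<beta> * expand_mat) $$ (k, l)
      = (\<Sum>i<N. if blk i = k then block_pattern_mat N blk \<delta> \<alpha> \<beta> $$ (i, rep l) else 0)"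
    using assms B_le_N by (auto simp: collapse_mult_expand_index mult_expand_mat_index intro!: sum.cong)
  then show ?thesis
    using assms rep_in_block[of l] sum_block_pattern_mat_column[of "rep l" N blk k "sz k"] sz[of k]
    by (auto simp: quotient_mat_def)
qed

lemma collapse_block_pattern_expand_upper_right:
  assumes "k < B" "B \<le> l" "l < N"
  shows "(collapse_mat * block_pattern_mat N blk \<delta> \<alpha> \<beta> * expand_mat) $$ (k, l) = 0"
proof -
  let ?A = "block_pattern_mat N blk \<delta> \<alpha> \<beta>"
  define x where "x = nonreps ! (l - B)"
  have x: "x < N" "blk x < B" using assms nonreps_nth[of "l - B"] by (auto simp: x_def)
  have "(collapse_mat * ?A * expand_mat) $$ (k, l)
      = (\<Sum>i<N. (if blk i = k then ?A $$ (i, x) else 0) - (if blk i = k then ?A $$ (i, rep (blk x)) else 0))"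
    using assms B_le_N by (auto simp: collapse_mult_expand_index mult_expand_mat_index x_def intro!: sum.cong)
  also have "\<dots> = 0"
    using assms x rep_in_block[of "blk x"] sz[of k]
    by (simp add: sum_subtractf sum_block_pattern_mat_column)
  finally show ?thesis .
qed

lemma collapse_block_pattern_expand_lower_right:
  assumes "B \<le> k" "k < N" "B \<le> l" "l < N"
  shows "(collapse_mat * block_pattern_mat N blk \<delta> \<alpha> \<beta> * expand_mat) $$ (k, l)
    = (if k = l then \<delta> (blk (nonreps ! (k - B))) - \<alpha> (blk (nonreps ! (k - B))) else 0)"
proof -
  let ?A = "block_pattern_mat N blk \<delta> \<alpha> \<beta>"
  define u x where "u = nonreps ! (k - B)" and "x = nonreps ! (l - B)"
  have "(collapse_mat * ?A * expand_mat) $$ (k, l) = ?A $$ (u, x) - ?A $$ (u, rep (blk x))"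
    using assms nonreps_nth[of "k - B"]
    by (simp add: collapse_mult_expand_index mult_expand_mat_index u_def x_def less_diff_conv2)
  also have "\<dots> = (if k = l then \<delta> (blk u) - \<alpha> (blk u) else 0)"
    using assms nonreps_nth[of "k - B"] nonreps_nth[of "l - B"] rep_in_block[of "blk x"]
      nonreps_nth_eq_iff[of "k - B" "l - B"]
    by (auto simp: block_pattern_mat_def u_def x_def)
  finally show ?thesis by (simp add: u_def)
qed

lemma collapse_block_pattern_expand:
  obtains X where "X \<in> carrier_mat (N - B) B"
    and "collapse_mat * block_pattern_mat N blk \<delta> \<alpha> \<beta> * expand_mat
      = four_block_mat (quotient_mat B sz \<delta> \<alpha> \<beta>) (0\<^sub>m B (N - B)) X
          (mat (N - B) (N - B) (\<lambda>(t, t'). if t = t' then \<delta> (blk (nonreps ! t)) - \<alpha> (blk (nonreps ! t)) else 0))"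
proof -
  let ?D = "collapse_mat * block_pattern_mat N blk \<delta> \<alpha> \<beta> * expand_mat"
  let ?X = "mat (N - B) B (\<lambda>(t, b). ?D $$ (B + t, b))"
  have "?D = four_block_mat (quotient_mat B sz \<delta> \<alpha> \<beta>) (0\<^sub>m B (N - B)) ?X
      (mat (N - B) (N - B) (\<lambda>(t, t'). if t = t' then \<delta> (blk (nonreps ! t)) - \<alpha> (blk (nonreps ! t)) else 0))"
    (is "_ = ?R")
  proof (rule eq_matI)
    fix k l assume "k < dim_row ?R" "l < dim_col ?R"
    then have "k < N" "l < N" using B_le_N by auto
    then show "?D $$ (k, l) = ?R $$ (k, l)"
      by (cases "k < B"; cases "l < B") (simp_all add: collapse_block_pattern_expand_upper_left
          collapse_block_pattern_expand_upper_right collapse_block_pattern_expand_lower_right eq_diff_iff)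
  qed (use B_le_N in \<open>simp_all add: collapse_mat_def expand_mat_def\<close>)
  then show ?thesis by (intro that[of ?X]) simp_all
qed

end

theorem char_poly_block_pattern_mat:
  fixes \<delta> \<alpha> :: "nat \<Rightarrow> 'a::field" and \<beta> :: "nat \<Rightarrow> nat \<Rightarrow> 'a"
  assumes sz: "\<And>b. b < B \<Longrightarrow> card {i. i < N \<and> blk i = b} = sz b"
  shows "char_poly (block_pattern_mat N blk \<delta> \<alpha> \<beta>)
    = char_poly (quotient_mat B sz \<delta> \<alpha> \<beta>) * (\<Prod>b<B. [:- (\<delta> b - \<alpha> b), 1:] ^ (sz b - 1))"
proof -
  let ?A = "block_pattern_mat N blk \<delta> \<alpha> \<beta>"
  let ?\<Lambda> = "mat (N - B) (N - B) (\<lambda>(t, t'). if t = t' then \<delta> (blk (nonreps ! t)) - \<alpha> (blk (nonreps ! t)) else 0)"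
  obtain X where X: "X \<in> carrier_mat (N - B) B"
    and decomp: "collapse_mat * ?A * expand_mat = four_block_mat (quotient_mat B sz \<delta> \<alpha> \<beta>) (0\<^sub>m B (N - B)) X ?\<Lambda>"
    using collapse_block_pattern_expand[OF sz] .
  have "char_poly ?A = char_poly (collapse_mat * ?A * expand_mat)"
    by (intro char_poly_similar similar_mat_conjugate[of _ N] collapse_mat_mult_expand_mat) simp_all
  also have "\<dots> = char_poly (quotient_mat B sz \<delta> \<alpha> \<beta>) * char_poly ?\<Lambda>"
    unfolding decomp by (rule char_poly_four_block_mat_upper_right_zero[OF _ X]) (simp_all add: quotient_mat_def)
  also have "char_poly ?\<Lambda> = (\<Prod>t<N - B. [:- (\<delta> (blk (nonreps ! t)) - \<alpha> (blk (nonreps ! t))), 1:])"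
    by (rule char_poly_diagonal)
  also have "\<dots> = (\<Prod>b<B. [:- (\<delta> b - \<alpha> b), 1:] ^ (sz b - 1))"
    unfolding prod_nonreps[of "\<lambda>b. [:- (\<delta> b - \<alpha> b), 1:]"] using sz by (intro prod.cong) auto
  finally show ?thesis .
qed

end

lemma det_Suc_first_column:
  fixes A :: "'a::comm_ring_1 mat"
  assumes A: "A \<in> carrier_mat (Suc m) (Suc m)"
  shows "det A = (\<Sum>i<Suc m. (-1) ^ i * A $$ (i, 0) * det (mat_delete A i 0))"
  by (subst laplace_expansion_column[OF A, of 0]) (auto simp: cofactor_def intro!: sum.cong)

lemma det_3:
  fixes A :: "'a::comm_ring_1 mat"
  assumes A: "A \<in> carrier_mat 3 3"
  shows "det A = A $$ (0,0) * (A $$ (1,1) * A $$ (2,2) - A $$ (2,1) * A $$ (1,2))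
     - A $$ (1,0) * (A $$ (0,1) * A $$ (2,2) - A $$ (2,1) * A $$ (0,2))
     + A $$ (2,0) * (A $$ (0,1) * A $$ (1,2) - A $$ (1,1) * A $$ (0,2))"
proof -
  have det_2: "det M = M $$ (0,0) * M $$ (1,1) - M $$ (1,0) * M $$ (0,1)" if "M \<in> carrier_mat 2 2" for M :: "'a mat"
    using that by (simp add: det_Suc_first_column[of M 1] numeral_2_eq_2 det_single mat_delete_def insert_index_def)
  show ?thesis
    using A by (simp add: det_Suc_first_column[of A 2] numeral_3_eq_3 det_2 mat_delete_def insert_index_def
        eval_nat_numeral algebra_simps)
qed

lemma char_poly_mat3_arrow:
  fixes Q :: "'a::comm_ring_1 mat"
  assumes Q: "Q \<in> carrier_mat 3 3" and "Q $$ (1,2) = 0" and "Q $$ (2,1) = 0"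
  shows "char_poly Q = [:- Q $$ (0,0), 1:] * [:- Q $$ (1,1), 1:] * [:- Q $$ (2,2), 1:]
     - Polynomial.smult (Q $$ (1,0) * Q $$ (0,1)) [:- Q $$ (2,2), 1:]
     - Polynomial.smult (Q $$ (2,0) * Q $$ (0,2)) [:- Q $$ (1,1), 1:]"
proof -
  have "char_poly_matrix Q $$ (i, j) = (if i = j then [:- Q $$ (i, j), 1:] else [:- Q $$ (i, j):])"
    if "i < 3" "j < 3" for i j
    using Q that by (auto simp: char_poly_matrix_def)
  then show ?thesis
    using Q assms(2,3) by (simp add: char_poly_def det_3[of "char_poly_matrix Q"] algebra_simps)
qed

lemma quotient_mat_star_eq_block_pattern_mat:
  fixes w :: "nat \<Rightarrow> nat \<Rightarrow> 'a::comm_ring_1"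
  assumes sz: "\<And>c. sz (min c 2) = sz c" and w: "\<And>c c'. w (min c 2) (min c' 2) = w c c'"
  shows "quotient_mat B sz (\<lambda>_. 0) (\<lambda>c. w c c) (\<lambda>c c'. if c = 0 \<or> c' = 0 then w c c' else 0)
    = block_pattern_mat B (\<lambda>c. min c 2) (\<lambda>c. of_nat (sz c - 1) * w c c) (\<lambda>_. 0)
        (\<lambda>c c'. if c = 0 \<or> c' = 0 then of_nat (sz c) * w c c' else 0)"
    (is "?Q = ?P")
proof (rule eq_matI)
  fix c c' assume "c < dim_row ?P" "c' < dim_col ?P"
  moreover have "min c 2 = min c' 2 \<Longrightarrow> c \<noteq> c' \<Longrightarrow> c \<noteq> 0 \<and> c' \<noteq> 0"
    and "min c 2 = 0 \<longleftrightarrow> c = 0" "min c' 2 = 0 \<longleftrightarrow> c' = 0"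
    by (auto simp: min_def split: if_splits)
  ultimately show "?Q $$ (c, c') = ?P $$ (c, c')"
    by (auto simp: quotient_mat_def block_pattern_mat_def sz w)
qed (simp_all add: block_pattern_mat_def)

lemma char_poly_star_block_pattern_mat:
  fixes \<delta> :: "nat \<Rightarrow> 'a::field" and \<beta> :: "nat \<Rightarrow> nat \<Rightarrow> 'a"
  assumes p: "1 \<le> p" and \<beta>: "\<beta> 1 2 = 0" "\<beta> 2 1 = 0"
  shows "char_poly (block_pattern_mat (p + 2) (\<lambda>c. min c 2) \<delta> (\<lambda>_. 0) \<beta>)
    = ([:- \<delta> 0, 1:] * [:- \<delta> 1, 1:] * [:- \<delta> 2, 1:]
        - Polynomial.smult (\<beta> 1 0 * \<beta> 0 1) [:- \<delta> 2, 1:]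
        - Polynomial.smult (of_nat p * \<beta> 2 0 * \<beta> 0 2) [:- \<delta> 1, 1:])
      * [:- \<delta> 2, 1:] ^ (p - 1)"
proof -
  define sz :: "nat \<Rightarrow> nat" where "sz c = (if c = 2 then p else 1)" for c
  have part: "block_partition (p + 2) 3 (\<lambda>c. min c 2)"
  proof
    show "\<exists>i<p + 2. min i 2 = b" if "b < 3" for b
      using that p by (intro exI[of _ b]) auto
  qed simp
  have card: "card {c. c < p + 2 \<and> min c 2 = b} = sz b" if "b < 3" for b
  proof -
    have "{c. c < p + 2 \<and> min c 2 = b} = (if b = 2 then {2..<p + 2} else {b})"
      using that p by (auto simp: min_def)
    then show ?thesis by (simp add: sz_def)
  qed
  have "char_poly (block_pattern_mat (p + 2) (\<lambda>c. min c 2) \<delta> (\<lambda>_. 0) \<beta>)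
      = char_poly (quotient_mat 3 sz \<delta> (\<lambda>_. 0) \<beta>) * (\<Prod>c<3. [:- (\<delta> c - 0), 1:] ^ (sz c - 1))"
    by (rule block_partition.char_poly_block_pattern_mat[OF part card])
  also have "char_poly (quotient_mat 3 sz \<delta> (\<lambda>_. 0) \<beta>)
    = [:- \<delta> 0, 1:] * [:- \<delta> 1, 1:] * [:- \<delta> 2, 1:]
        - Polynomial.smult (\<beta> 1 0 * \<beta> 0 1) [:- \<delta> 2, 1:]
        - Polynomial.smult (of_nat p * \<beta> 2 0 * \<beta> 0 2) [:- \<delta> 1, 1:]"
    by (subst char_poly_mat3_arrow)
      (simp_all add: quotient_mat_def sz_def \<beta>[unfolded One_nat_def] carrier_matI mult.assoc)
  also have "(\<Prod>c<3. [:- (\<delta> c - 0), 1:] ^ (sz c - 1)) = [:- \<delta> 2, 1:] ^ (p - 1)"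
    by (simp add: sz_def numeral_3_eq_3 numeral_2_eq_2 lessThan_Suc)
  finally show ?thesis .
qed

section \<open>The commuting graph of the semidihedral group\<close>

lemma nat_mod_eq_iff_int_dvd: "(a::nat) mod m = b mod m \<longleftrightarrow> int m dvd int a - int b"
  by (metis mod_eq_dvd_iff of_nat_eq_iff of_nat_mod)

lemma card_less_mult_mod_eq:
  assumes "k < (p::nat)"
  shows "card {x. x < z * p \<and> x mod p = k} = z"
proof -
  have "{x. x < z * p \<and> x mod p = k} = (\<lambda>t. k + p * t) ` {..<z}"
  proof (intro equalityI subsetI)
    fix x assume "x \<in> {x. x < z * p \<and> x mod p = k}"
    then have "x = k + p * (x div p)" "x div p < z"
      by (auto simp: less_mult_imp_div_less)
    then show "x \<in> (\<lambda>t. k + p * t) ` {..<z}" by blast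
  next
    fix x assume "x \<in> (\<lambda>t. k + p * t) ` {..<z}"
    then obtain t where "t < z" "x = k + p * t" by auto
    moreover have "k + p * t < p * (t + 1)" using assms by simp
    moreover have "p * (t + 1) \<le> p * z" using \<open>t < z\<close> by (intro mult_le_mono2) simp
    ultimately show "x \<in> {x. x < z * p \<and> x mod p = k}" using assms by (simp add: mult.commute)
  qed
  moreover have "inj_on (\<lambda>t. k + p * t) {..<z}" using assms by (simp add: inj_on_def)
  ultimately show ?thesis by (simp add: card_image)
qed

lemma graph_deg_eq_card_nth:
  assumes "distinct vs"
  shows "graph_deg vs E x = card {w. w < length vs \<and> E x (vs ! w)}"
proof -
  have "{y \<in> set vs. E x y} = (!) vs ` {w. w < length vs \<and> E x (vs ! w)}"
    by (auto simp: in_set_conv_nth)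
  moreover have "inj_on ((!) vs) {w. w < length vs \<and> E x (vs ! w)}"
    using assms by (simp add: inj_on_def nth_eq_iff_index_eq)
  ultimately show ?thesis by (simp add: graph_deg_def card_image)
qed

definition sd_period :: "nat \<Rightarrow> nat" where
  "sd_period n = (if odd n then n else 2 * n)"

definition sd_center_card :: "nat \<Rightarrow> nat" where
  "sd_center_card n = (if odd n then 4 else 2)"

lemma sd_center_card_mult_period: "sd_center_card n * sd_period n = 4 * n"
  by (simp add: sd_center_card_def sd_period_def)

lemma sd_list_eq: "sd_list n = map (\<lambda>i. (i, 0)) [0..<4 * n] @ map (\<lambda>i. (i, 1)) [0..<4 * n]"
proof -
  have "[0..<2] = [0::nat, 1]" by (simp add: upt_rec)
  then show ?thesis by (simp add: sd_list_def)
qed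

lemma length_sd_list [simp]: "length (sd_list n) = 8 * n"
  by (simp add: sd_list_eq)

lemma sd_list_nth: "v < 8 * n \<Longrightarrow> sd_list n ! v = (v mod (4 * n), v div (4 * n))"
  by (cases "v < 4 * n") (auto simp: sd_list_eq nth_append mod_if div_if)

lemma distinct_sd_list: "distinct (sd_list n)"
  by (auto simp: distinct_conv_nth sd_list_nth) (metis div_mult_mod_eq)

text \<open>Since b a^k b = a^((2n - 1) k), the commutator a^(-k) b a^k b is a^((2n - 2) k).\<close>
lemma four_n_dvd_iff_sd_period_dvd:
  fixes x :: int
  shows "int (4 * n) dvd (2 * int n - 2) * x \<longleftrightarrow> int (sd_period n) dvd x"
proof (cases "odd n")
  case True
  then obtain m where m: "n = 2 * m + 1" by (metis oddE)
  have "coprime (2 * int m + 1) (int m)"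
    by (meson coprime_add_one_left coprime_mult_right_iff)
  then have "coprime (int n) (int m)" using m by (simp add: add.commute)
  then have "int n dvd int m * x \<longleftrightarrow> int n dvd x"
    by (simp add: coprime_dvd_mult_right_iff)
  moreover have "int (4 * n) dvd (2 * int n - 2) * x \<longleftrightarrow> int n dvd int m * x"
    using dvd_times_left_cancel_iff[of 4 "int n" "int m * x"] unfolding m by (simp add: algebra_simps)
  ultimately show ?thesis using True by (simp add: sd_period_def)
next
  case False
  then obtain m where m: "n = 2 * m" by (metis evenE)
  have "coprime (4 * int m) (2 * int m - 1)"
    by (metis coprime_doff_one_right coprime_mult_left_iff numeral_Bit0_eq_double)
  then have "4 * int m dvd (2 * int m - 1) * x \<longleftrightarrow> 4 * int m dvd x"
    by (rule coprime_dvd_mult_right_iff)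
  moreover have "int (4 * n) dvd (2 * int n - 2) * x \<longleftrightarrow> 4 * int m dvd (2 * int m - 1) * x"
    using dvd_times_left_cancel_iff[of 2 "4 * int m" "(2 * int m - 1) * x"] unfolding m
    by (simp add: algebra_simps)
  ultimately show ?thesis using False m by (simp add: sd_period_def)
qed

lemma sd_mult_commute_iff:
  assumes n: "0 < n" and j: "j < 2" and l: "l < 2"
  shows "sd_mult n (i, j) (k, l) = sd_mult n (k, l) (i, j)
    \<longleftrightarrow> int (sd_period n) dvd int j * int k - int l * int i"
proof -
  have pow: "int ((2 * n - 1) ^ e) = 1 + (2 * int n - 2) * int e" if "e < 2" for e
    using that n by (cases e) (auto simp: of_nat_diff)
  have "sd_mult n (i, j) (k, l) = sd_mult n (k, l) (i, j)
      \<longleftrightarrow> (i + (2 * n - 1) ^ j * k) mod (4 * n) = (k + (2 * n - 1) ^ l * i) mod (4 * n)"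
    by (simp add: sd_mult_def add.commute)
  also have "\<dots> \<longleftrightarrow> int (4 * n) dvd int (i + (2 * n - 1) ^ j * k) - int (k + (2 * n - 1) ^ l * i)"
    by (rule nat_mod_eq_iff_int_dvd)
  also have "int (i + (2 * n - 1) ^ j * k) - int (k + (2 * n - 1) ^ l * i)
      = (2 * int n - 2) * (int j * int k - int l * int i)"
    unfolding of_nat_add of_nat_mult pow[OF j] pow[OF l] by (simp add: algebra_simps)
  finally show ?thesis by (simp only: four_n_dvd_iff_sd_period_dvd)
qed

text \<open>Position v of sd_list n is in class 0 (the centre), 1 (the non-central rotations) or
  2 + r (the reflections a^i b with i mod sd_period n = r).\<close>
definition sd_class :: "nat \<Rightarrow> nat \<Rightarrow> nat" where
  "sd_class n v = (if v < 4 * n then (if sd_period n dvd v then 0 else 1) else 2 + v mod sd_period n)"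

lemma commuting_adj_sd_list_nth:
  assumes n: "0 < n" and v: "v < 8 * n" and w: "w < 8 * n"
  shows "commuting_adj n (sd_list n ! v) (sd_list n ! w)
    \<longleftrightarrow> v \<noteq> w \<and> (sd_class n v = sd_class n w \<or> sd_class n v = 0 \<or> sd_class n w = 0)"
proof -
  define p where "p = sd_period n"
  have p: "p dvd 4 * n" "0 < p" using n sd_center_card_mult_period[of n]
    by (auto simp: p_def sd_period_def)
  have class_eq: "sd_class n x = (if x div (4 * n) = 0 then (if p dvd x mod (4 * n) then 0 else 1)
      else 2 + x mod (4 * n) mod p)" if "x < 8 * n" for x
  proof (cases "x < 4 * n")
    case False
    define r where "r = x - 4 * n"
    have r: "x = 4 * n + r" "r < 4 * n" using False that by (simp_all add: r_def)
    have "(4 * n + r) mod p = r mod p" using p(1) by (simp add: mod_add_left_eq[symmetric])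
    then show ?thesis using r by (simp add: sd_class_def p_def)
  qed (simp add: sd_class_def p_def)
  have "sd_list n ! v = sd_list n ! w \<longleftrightarrow> v = w"
    using distinct_sd_list v w by (simp add: nth_eq_iff_index_eq)
  moreover have "v div (4 * n) < 2" "w div (4 * n) < 2"
    using v w by (simp_all add: div_less_iff_less_mult)
  ultimately show ?thesis
    unfolding commuting_adj_def sd_list_nth[OF v] sd_list_nth[OF w] class_eq[OF v] class_eq[OF w]
    using p by (auto simp: sd_mult_commute_iff[OF n] p_def[symmetric] less_2_cases_iff
        nat_mod_eq_iff_int_dvd[of "v mod (4 * n)"] dvd_diff_commute)
qed

definition sd_class_size :: "nat \<Rightarrow> nat \<Rightarrow> nat" where
  "sd_class_size n c = (if c = 1 then 4 * n - sd_center_card n else sd_center_card n)"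

definition sd_class_degree :: "nat \<Rightarrow> nat \<Rightarrow> nat" where
  "sd_class_degree n c = (if c = 0 then 8 * n - 1 else if c = 1 then 4 * n - 1 else 2 * sd_center_card n - 1)"

lemma sd_class_less: "0 < n \<Longrightarrow> sd_class n v < sd_period n + 2"
  by (simp add: sd_class_def sd_period_def)

lemma card_sd_class:
  assumes n: "0 < n" and c: "c < sd_period n + 2"
  shows "card {v. v < 8 * n \<and> sd_class n v = c} = sd_class_size n c"
proof -
  define z p where "z = sd_center_card n" and "p = sd_period n"
  have zp: "4 * n = z * p" "8 * n = (2 * z) * p" and p: "0 < p"
    using sd_center_card_mult_period[of n] n by (auto simp: z_def p_def sd_period_def)
  have center: "{v. v < 8 * n \<and> sd_class n v = 0} = {v. v < z * p \<and> v mod p = 0}"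
    using zp by (auto simp: sd_class_def p_def dvd_eq_mod_eq_0)
  consider "c = 0" | "c = 1" | "2 \<le> c" by linarith
  then show ?thesis
  proof cases
    case 1
    then show ?thesis using center card_less_mult_mod_eq[OF p] by (simp add: sd_class_size_def z_def p_def)
  next
    case 2
    have "{v. v < 8 * n \<and> sd_class n v = 1} = {..<4 * n} - {v. v < z * p \<and> v mod p = 0}"
      using zp by (auto simp: sd_class_def p_def dvd_eq_mod_eq_0)
    moreover have "{v. v < z * p \<and> v mod p = 0} \<subseteq> {..<4 * n}" using zp by auto
    ultimately show ?thesis
      using 2 card_less_mult_mod_eq[OF p, of z] by (simp add: card_Diff_subset sd_class_size_def z_def)
  next
    case 3
    define r where "r = c - 2"
    have r: "c = 2 + r" "r < p" using 3 c by (simp_all add: r_def p_def)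
    have "{v. v < 8 * n \<and> sd_class n v = c}
        = {v. v < (2 * z) * p \<and> v mod p = r} - {v. v < z * p \<and> v mod p = r}"
      using zp r by (auto simp: sd_class_def p_def)
    moreover have "{v. v < z * p \<and> v mod p = r} \<subseteq> {v. v < (2 * z) * p \<and> v mod p = r}" by auto
    ultimately show ?thesis
      using 3 r card_less_mult_mod_eq[OF \<open>r < p\<close>] by (simp add: card_Diff_subset sd_class_size_def z_def)
  qed
qed

lemma graph_deg_sd_list_nth:
  assumes n: "2 \<le> n" and v: "v < 8 * n"
  shows "graph_deg (sd_list n) (commuting_adj n) (sd_list n ! v) = sd_class_degree n (sd_class n v)"
proof -
  let ?c = "sd_class n v"
  have "graph_deg (sd_list n) (commuting_adj n) (sd_list n ! v)
      = card {w. w < 8 * n \<and> v \<noteq> w \<and> (?c = sd_class n w \<or> ?c = 0 \<or> sd_class n w = 0)}"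
    using n v by (simp add: graph_deg_eq_card_nth distinct_sd_list commuting_adj_sd_list_nth conj_commute cong: conj_cong)
  also have "\<dots> = sd_class_degree n ?c"
  proof (cases "?c = 0")
    case True
    then have "{w. w < 8 * n \<and> v \<noteq> w \<and> (?c = sd_class n w \<or> ?c = 0 \<or> sd_class n w = 0)} = {..<8 * n} - {v}"
      by auto
    then show ?thesis using True v by (simp add: sd_class_degree_def)
  next
    case False
    let ?C = "{w. w < 8 * n \<and> sd_class n w = ?c}" and ?Z = "{w. w < 8 * n \<and> sd_class n w = 0}"
    have "{w. w < 8 * n \<and> v \<noteq> w \<and> (?c = sd_class n w \<or> ?c = 0 \<or> sd_class n w = 0)} = (?C - {v}) \<union> ?Z"
      using False by auto
    moreover have "card ((?C - {v}) \<union> ?Z) = card (?C - {v}) + card ?Z"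
      using False by (intro card_Un_disjoint) auto
    moreover have "card (?C - {v}) = sd_class_size n ?c - 1"
      using n v card_sd_class[of n ?c] sd_class_less[of n v] by simp
    moreover have "card ?Z = sd_center_card n"
      using n card_sd_class[of n 0] by (simp add: sd_class_size_def)
    ultimately have "card {w. w < 8 * n \<and> v \<noteq> w \<and> (?c = sd_class n w \<or> ?c = 0 \<or> sd_class n w = 0)}
        = sd_class_size n ?c - 1 + sd_center_card n"
      by simp
    moreover have "1 \<le> sd_center_card n" "sd_center_card n \<le> 4" by (simp_all add: sd_center_card_def)
    ultimately show ?thesis
      using False n by (simp add: sd_class_size_def sd_class_degree_def mult_2)
  qed
  finally show ?thesis .
qed

section \<open>The Sombor spectrum\<close>

definition sd_sombor_weight :: "nat \<Rightarrow> nat \<Rightarrow> nat \<Rightarrow> complex" where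
  "sd_sombor_weight n c c' = complex_of_real (sqrt (real (sd_class_degree n c) ^ 2 + real (sd_class_degree n c') ^ 2))"

lemma sombor_matrix_sd_list:
  assumes "2 \<le> n"
  shows "sombor_matrix (sd_list n) (commuting_adj n) = block_pattern_mat (8 * n) (sd_class n)
    (\<lambda>_. 0) (\<lambda>c. sd_sombor_weight n c c) (\<lambda>c c'. if c = 0 \<or> c' = 0 then sd_sombor_weight n c c' else 0)"
  using assms by (intro eq_matI) (auto simp: sombor_matrix_def block_pattern_mat_def
      commuting_adj_sd_list_nth graph_deg_sd_list_nth sd_sombor_weight_def)

lemma block_partition_sd_class:
  assumes n: "2 \<le> n"
  shows "block_partition (8 * n) (sd_period n + 2) (sd_class n)"
proof
  show "sd_class n i < sd_period n + 2" for i
    using n sd_class_less[of n i] by simp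
  show "\<exists>i<8 * n. sd_class n i = c" if "c < sd_period n + 2" for c
  proof (rule ccontr)
    assume "\<not> (\<exists>i<8 * n. sd_class n i = c)"
    then have "card {v. v < 8 * n \<and> sd_class n v = c} = 0" by auto
    moreover have "0 < sd_class_size n c" using n by (simp add: sd_class_size_def sd_center_card_def)
    ultimately show False using n that card_sd_class[of n c] by simp
  qed
qed

lemma sd_class_size_min: "sd_class_size n (min c 2) = sd_class_size n c"
  by (simp add: sd_class_size_def min_def)

lemma sd_sombor_weight_min: "sd_sombor_weight n (min c 2) (min c' 2) = sd_sombor_weight n c c'"
  by (simp add: sd_sombor_weight_def sd_class_degree_def min_def)

lemma prod_sd_class_factors:
  fixes n :: nat
  defines "z \<equiv> sd_center_card n" and "p \<equiv> sd_period n" and "W \<equiv> sd_sombor_weight n"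
  shows "(\<Prod>c<p + 2. [:- (0 - W c c), 1:] ^ (sd_class_size n c - 1))
    = [:W 0 0, 1:] ^ (z - 1) * [:W 1 1, 1:] ^ (4 * n - z - 1) * [:W 2 2, 1:] ^ (p * (z - 1))"
proof -
  let ?f = "\<lambda>c. [:- (0 - W c c), 1:] ^ (sd_class_size n c - 1)"
  have "{..<p + 2} = insert 0 (insert 1 {2..<p + 2})" by auto
  then have "(\<Prod>c<p + 2. ?f c) = ?f 0 * (?f 1 * (\<Prod>c = 2..<p + 2. ?f c))" by simp
  also have "(\<Prod>c = 2..<p + 2. ?f c) = (\<Prod>c = 2..<p + 2. [:W 2 2, 1:] ^ (z - 1))"
    by (intro prod.cong) (simp_all add: W_def sd_sombor_weight_def z_def sd_class_size_def sd_class_degree_def)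
  also have "\<dots> = [:W 2 2, 1:] ^ (p * (z - 1))"
    by (simp add: power_mult[symmetric] mult.commute[of p])
  finally show ?thesis by (simp add: sd_class_size_def z_def mult.assoc)
qed

lemma char_poly_sombor_matrix_sd_list_quotient:
  assumes n: "2 \<le> n"
  defines "z \<equiv> sd_center_card n" and "p \<equiv> sd_period n" and "W \<equiv> sd_sombor_weight n"
  shows "char_poly (sombor_matrix (sd_list n) (commuting_adj n))
    = char_poly (block_pattern_mat (p + 2) (\<lambda>c. min c 2) (\<lambda>c. of_nat (sd_class_size n c - 1) * W c c) (\<lambda>_. 0)
        (\<lambda>c c'. if c = 0 \<or> c' = 0 then of_nat (sd_class_size n c) * W c c' else 0))
      * [:W 0 0, 1:] ^ (z - 1) * [:W 1 1, 1:] ^ (4 * n - z - 1) * [:W 2 2, 1:] ^ (p * (z - 1))"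
proof -
  have "char_poly (sombor_matrix (sd_list n) (commuting_adj n))
      = char_poly (quotient_mat (p + 2) (sd_class_size n) (\<lambda>_. 0) (\<lambda>c. W c c)
          (\<lambda>c c'. if c = 0 \<or> c' = 0 then W c c' else 0))
        * (\<Prod>c<p + 2. [:- (0 - W c c), 1:] ^ (sd_class_size n c - 1))"
    unfolding sombor_matrix_sd_list[OF n] W_def p_def
    by (rule block_partition.char_poly_block_pattern_mat[OF block_partition_sd_class[OF n]])
      (use n card_sd_class in simp)
  then show ?thesis
    unfolding quotient_mat_star_eq_block_pattern_mat[where sz = "sd_class_size n" and w = W,
        OF sd_class_size_min sd_sombor_weight_min[of n, folded W_def]]
      prod_sd_class_factors[of n, folded z_def p_def W_def] by (simp only: mult.assoc)
qed

lemma sd_sombor_weight_diag: "sd_sombor_weight n c c = complex_of_real (real (sd_class_degree n c) * sqrt 2)"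
proof -
  have "sqrt (real (sd_class_degree n c) ^ 2 + real (sd_class_degree n c) ^ 2) = real (sd_class_degree n c) * sqrt 2"
    by (simp add: real_sqrt_mult mult.commute)
  then show ?thesis by (simp add: sd_sombor_weight_def)
qed

lemma sd_sombor_weight_mult_swap:
  "sd_sombor_weight n c c' * sd_sombor_weight n c' c = complex_of_real (real (sd_class_degree n c) ^ 2 + real (sd_class_degree n c') ^ 2)"
  by (simp add: sd_sombor_weight_def add.commute flip: of_real_mult)

lemma real_sd_class_size_degree:
  assumes n: "2 \<le> n"
  defines "z \<equiv> real (sd_center_card n)"
  shows "real (sd_class_size n 0) = z" "real (sd_class_size n 1) = 4 * real n - z"
    "real (sd_class_size n 2) = z" "real (sd_class_size n 0 - 1) = z - 1"
    "real (sd_class_size n 1 - 1) = 4 * real n - z - 1" "real (sd_class_size n 2 - 1) = z - 1"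
    "real (sd_class_degree n 0) = 8 * real n - 1" "real (sd_class_degree n 1) = 4 * real n - 1"
    "real (sd_class_degree n 2) = 2 * z - 1"
  using n by (simp_all add: sd_class_size_def sd_class_degree_def z_def sd_center_card_def of_nat_diff)

lemma char_poly_sombor_matrix_sd_list:
  assumes n: "2 \<le> n"
  defines "z \<equiv> sd_center_card n" and "p \<equiv> sd_period n"
  defines "d0 \<equiv> 8 * real n - 1" and "d1 \<equiv> 4 * real n - 1" and "d2 \<equiv> 2 * real z - 1"
  shows "char_poly (sombor_matrix (sd_list n) (commuting_adj n))
    = ([:- complex_of_real ((real z - 1) * d0 * sqrt 2), 1:]
          * [:- complex_of_real ((4 * real n - real z - 1) * d1 * sqrt 2), 1:]
          * [:- complex_of_real ((real z - 1) * d2 * sqrt 2), 1:]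
        - Polynomial.smult (complex_of_real ((4 * real n - real z) * real z * (d1 ^ 2 + d0 ^ 2)))
            [:- complex_of_real ((real z - 1) * d2 * sqrt 2), 1:]
        - Polynomial.smult (complex_of_real (real p * real z * real z * (d2 ^ 2 + d0 ^ 2)))
            [:- complex_of_real ((4 * real n - real z - 1) * d1 * sqrt 2), 1:])
      * [:- complex_of_real ((real z - 1) * d2 * sqrt 2), 1:] ^ (p - 1)
      * [:- complex_of_real (- d0 * sqrt 2), 1:] ^ (z - 1)
      * [:- complex_of_real (- d1 * sqrt 2), 1:] ^ (4 * n - z - 1)
      * [:- complex_of_real (- d2 * sqrt 2), 1:] ^ (p * (z - 1))"
proof -
  define W where "W = sd_sombor_weight n"
  define \<delta> where "\<delta> = (\<lambda>c. of_nat (sd_class_size n c - 1) * W c c)"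
  define \<beta> where "\<beta> = (\<lambda>c c'. if c = 0 \<or> c' = 0 then of_nat (sd_class_size n c) * W c c' else 0)"
  note class_values = real_sd_class_size_degree[OF n, folded z_def d0_def d1_def, folded d2_def]
  have p: "1 \<le> p" using n by (simp add: p_def sd_period_def)
  have \<delta>: "\<delta> 0 = complex_of_real ((real z - 1) * d0 * sqrt 2)"
    "\<delta> 1 = complex_of_real ((4 * real n - real z - 1) * d1 * sqrt 2)"
    "\<delta> 2 = complex_of_real ((real z - 1) * d2 * sqrt 2)"
    unfolding \<delta>_def W_def sd_sombor_weight_diag of_real_of_nat_eq[where 'a = complex, symmetric]
      of_real_mult[symmetric] class_values by (simp_all only: mult.assoc)
  have "\<beta> 1 0 * \<beta> 0 1 = of_nat (sd_class_size n 1) * of_nat (sd_class_size n 0) * (W 1 0 * W 0 1)"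
    "of_nat p * \<beta> 2 0 * \<beta> 0 2
      = of_nat p * of_nat (sd_class_size n 2) * of_nat (sd_class_size n 0) * (W 2 0 * W 0 2)"
    by (simp_all add: \<beta>_def mult_ac)
  then have \<beta>: "\<beta> 1 0 * \<beta> 0 1 = complex_of_real ((4 * real n - real z) * real z * (d1 ^ 2 + d0 ^ 2))"
    "of_nat p * \<beta> 2 0 * \<beta> 0 2 = complex_of_real (real p * real z * real z * (d2 ^ 2 + d0 ^ 2))"
    by (simp_all only: W_def sd_sombor_weight_mult_swap of_real_of_nat_eq[where 'a = complex, symmetric]
        of_real_mult[symmetric] class_values)
  have W: "[:W c c, 1:] = [:- complex_of_real (- real (sd_class_degree n c) * sqrt 2), 1:]" for c
    by (simp add: W_def sd_sombor_weight_diag)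
  have "char_poly (sombor_matrix (sd_list n) (commuting_adj n))
      = char_poly (block_pattern_mat (p + 2) (\<lambda>c. min c 2) \<delta> (\<lambda>_. 0) \<beta>)
        * [:W 0 0, 1:] ^ (z - 1) * [:W 1 1, 1:] ^ (4 * n - z - 1) * [:W 2 2, 1:] ^ (p * (z - 1))"
    unfolding char_poly_sombor_matrix_sd_list_quotient[OF n] \<delta>_def \<beta>_def W_def z_def p_def ..
  also have "char_poly (block_pattern_mat (p + 2) (\<lambda>c. min c 2) \<delta> (\<lambda>_. 0) \<beta>)
      = ([:- \<delta> 0, 1:] * [:- \<delta> 1, 1:] * [:- \<delta> 2, 1:]
        - Polynomial.smult (\<beta> 1 0 * \<beta> 0 1) [:- \<delta> 2, 1:]
        - Polynomial.smult (of_nat p * \<beta> 2 0 * \<beta> 0 2) [:- \<delta> 1, 1:])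
      * [:- \<delta> 2, 1:] ^ (p - 1)"
    by (rule char_poly_star_block_pattern_mat[OF p]) (simp_all add: \<beta>_def)
  finally show ?thesis by (simp only: \<delta> \<beta> W class_values)
qed

lemma sombor_spectrum_sd_list:
  assumes n: "2 \<le> n"
  defines "z \<equiv> sd_center_card n" and "p \<equiv> sd_period n"
  defines "d0 \<equiv> 8 * real n - 1" and "d1 \<equiv> 4 * real n - 1" and "d2 \<equiv> 2 * real z - 1"
  shows "sombor_spectrum (sd_list n) (commuting_adj n) =
      replicate_mset (z - 1) (complex_of_real (- d0 * sqrt 2))
    + replicate_mset (4 * n - z - 1) (complex_of_real (- d1 * sqrt 2))
    + replicate_mset (p * (z - 1)) (complex_of_real (- d2 * sqrt 2))
    + replicate_mset (p - 1) (complex_of_real ((real z - 1) * d2 * sqrt 2))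
    + proots ([:- complex_of_real ((real z - 1) * d0 * sqrt 2), 1:]
              * [:- complex_of_real ((4 * real n - real z - 1) * d1 * sqrt 2), 1:]
              * [:- complex_of_real ((real z - 1) * d2 * sqrt 2), 1:]
            - Polynomial.smult (complex_of_real ((4 * real n - real z) * real z * (d1 ^ 2 + d0 ^ 2)))
                [:- complex_of_real ((real z - 1) * d2 * sqrt 2), 1:]
            - Polynomial.smult (complex_of_real (real p * real z * real z * (d2 ^ 2 + d0 ^ 2)))
                [:- complex_of_real ((4 * real n - real z - 1) * d1 * sqrt 2), 1:])"
proof -
  note cp = char_poly_sombor_matrix_sd_list[OF n, folded z_def p_def d0_def d1_def, folded d2_def]
  have "sombor_matrix (sd_list n) (commuting_adj n) \<in> carrier_mat (8 * n) (8 * n)"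
    by (simp add: sombor_matrix_def)
  from degree_monic_char_poly[OF this]
  have "char_poly (sombor_matrix (sd_list n) (commuting_adj n)) \<noteq> 0" by auto
  moreover have "proots (C * [:- x, 1:] ^ (p - 1) * [:- y0, 1:] ^ (z - 1) * [:- y1, 1:] ^ (4 * n - z - 1)
        * [:- y2, 1:] ^ (p * (z - 1)))
      = replicate_mset (z - 1) y0 + replicate_mset (4 * n - z - 1) y1 + replicate_mset (p * (z - 1)) y2
        + replicate_mset (p - 1) x + proots C"
    if "C * [:- x, 1:] ^ (p - 1) * [:- y0, 1:] ^ (z - 1) * [:- y1, 1:] ^ (4 * n - z - 1)
        * [:- y2, 1:] ^ (p * (z - 1)) \<noteq> 0" for C :: "complex poly" and x y0 y1 y2
    using that by (simp add: proots_mult proots_power add_ac)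
  ultimately show ?thesis unfolding sombor_spectrum_def cp by blast
qed

theorem corollary4p3:
  fixes n :: nat
  assumes "n \<ge> 2"
  shows "(odd n \<longrightarrow>
           sombor_spectrum (sd_list n) (commuting_adj n) =
             replicate_mset 3 (complex_of_real (- (8 * real n - 1) * sqrt 2))
           + replicate_mset (4 * n - 5) (complex_of_real (- (4 * real n - 1) * sqrt 2))
           + replicate_mset (3 * n) (complex_of_real (- 7 * sqrt 2))
           + replicate_mset (n - 1) (complex_of_real (21 * sqrt 2))
           + proots ([:- complex_of_real (3 * (8 * real n - 1) * sqrt 2), 1:]
                     * [:- complex_of_real ((4 * real n - 5) * (4 * real n - 1) * sqrt 2), 1:]
                     * [:- complex_of_real (21 * sqrt 2), 1:]
                   - Polynomial.smult (complex_of_real (32 * (real n - 1) * (40 * real n ^ 2 - 12 * real n + 1)))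
                       [:- complex_of_real (21 * sqrt 2), 1:]
                   - Polynomial.smult (complex_of_real (32 * real n * (32 * real n ^ 2 - 8 * real n + 25)))
                       [:- complex_of_real ((4 * real n - 1) * (4 * real n - 5) * sqrt 2), 1:]))
       \<and> (even n \<longrightarrow>
           sombor_spectrum (sd_list n) (commuting_adj n) =
             replicate_mset 1 (complex_of_real (- (8 * real n - 1) * sqrt 2))
           + replicate_mset (4 * n - 3) (complex_of_real (- (4 * real n - 1) * sqrt 2))
           + replicate_mset (2 * n) (complex_of_real (- 3 * sqrt 2))
           + replicate_mset (2 * n - 1) (complex_of_real (3 * sqrt 2))
           + proots ([:- complex_of_real ((8 * real n - 1) * sqrt 2), 1:]
                     * [:- complex_of_real ((4 * real n - 1) * (4 * real n - 3) * sqrt 2), 1:]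
                     * [:- complex_of_real (3 * sqrt 2), 1:]
                   - Polynomial.smult (complex_of_real (8 * (2 * real n - 1) * (40 * real n ^ 2 - 12 * real n + 1)))
                       [:- complex_of_real (3 * sqrt 2), 1:]
                   - Polynomial.smult (complex_of_real (16 * real n * (32 * real n ^ 2 - 8 * real n + 5)))
                       [:- complex_of_real ((4 * real n - 1) * (4 * real n - 3) * sqrt 2), 1:]))"
proof (cases "even n")
  case False
  then have "sd_center_card n = 4" "sd_period n = n" by (simp_all add: sd_center_card_def sd_period_def)
  note spectrum = sombor_spectrum_sd_list[OF assms, unfolded this]
  have "(4::nat) - 1 = 3" "4 * n - 4 - 1 = 4 * n - 5" "n * (4 - 1) = 3 * n"
    "- (2 * real (4::nat) - 1) * sqrt 2 = - 7 * sqrt 2"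
    "(real (4::nat) - 1) * (2 * real (4::nat) - 1) * sqrt 2 = 21 * sqrt 2"
    "(real (4::nat) - 1) * (8 * real n - 1) * sqrt 2 = 3 * (8 * real n - 1) * sqrt 2"
    "(4 * real n - real (4::nat) - 1) * (4 * real n - 1) = (4 * real n - 5) * (4 * real n - 1)"
    by simp_all
  moreover have "(4 * real n - real (4::nat)) * real (4::nat) * ((4 * real n - 1) ^ 2 + (8 * real n - 1) ^ 2)
      = 32 * (real n - 1) * (40 * real n ^ 2 - 12 * real n + 1)"
    "real n * real (4::nat) * real (4::nat) * ((2 * real (4::nat) - 1) ^ 2 + (8 * real n - 1) ^ 2)
      = 32 * real n * (32 * real n ^ 2 - 8 * real n + 25)"
    by (simp_all add: algebra_simps power2_eq_square)
  \<comment> \<open>the statement writes the last linear factor as (4n - 1)(4n - 5), hence the reordering\<close>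
  ultimately show ?thesis
    using spectrum False by (simp only: simp_thms) (simp only: mult.commute)
next
  case True
  then have "sd_center_card n = 2" "sd_period n = 2 * n" by (simp_all add: sd_center_card_def sd_period_def)
  note spectrum = sombor_spectrum_sd_list[OF assms, unfolded this]
  have "(2::nat) - 1 = 1" "4 * n - 2 - 1 = 4 * n - 3" "2 * n * (2 - 1) = 2 * n"
    "- (2 * real (2::nat) - 1) * sqrt 2 = - 3 * sqrt 2"
    "(real (2::nat) - 1) * (2 * real (2::nat) - 1) * sqrt 2 = 3 * sqrt 2"
    "(real (2::nat) - 1) * (8 * real n - 1) * sqrt 2 = (8 * real n - 1) * sqrt 2"
    "(4 * real n - real (2::nat) - 1) * (4 * real n - 1) = (4 * real n - 1) * (4 * real n - 3)"
    by simp_all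
  moreover have "(4 * real n - real (2::nat)) * real (2::nat) * ((4 * real n - 1) ^ 2 + (8 * real n - 1) ^ 2)
      = 8 * (2 * real n - 1) * (40 * real n ^ 2 - 12 * real n + 1)"
    "real (2 * n) * real (2::nat) * real (2::nat) * ((2 * real (2::nat) - 1) ^ 2 + (8 * real n - 1) ^ 2)
      = 16 * real n * (32 * real n ^ 2 - 8 * real n + 5)"
    by (simp_all add: algebra_simps power2_eq_square)
  ultimately show ?thesis using spectrum True by (simp only: simp_thms)
qed

end
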